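(* Consider a block-fading channel with channel power gain $h(\nu)\ge0$ (a random variable with continuous pdf) at fading state $\nu$, noise power $\sigma^2>0$, and power limits $0<P_{\rm avg}\le P_{\rm peak}$; let $\mathcal P=\{p(\nu): E_\nu[p(\nu)]\le P_{\rm avg},\ 0\le p(\nu)\le P_{\rm peak}\ \forall\nu\}$. For a feasible target $\bar Q\ge0$, consider the problem: maximize over $p(\nu)$ the quantity $E_\nu\big[\log\big(1+\frac{h(\nu)p(\nu)}{\sigma^2}\big)\big]$ subject to $E_\nu[h(\nu)p(\nu)]\ge\bar Q$ and $p\in\mathcal P$. Let $\lambda^\ast\ge0$ and $\beta^\ast\ge0$ be the optimal dual solutions associated with the harvested energy constraint and the average power constraint, respectively. Then the optimal power allocation is $p(\nu)=P_{\rm peak}$ if $h(\nu)\ge\frac{\beta^\ast}{\lambda^\ast}$, and $p(\nu)=\Big[\frac{1}{\beta^\ast-\lambda^\ast h(\nu)}-\frac{\sigma^2}{h(\nu)}\Big]_0^{P_{\rm peak}}$ otherwise, where $[x]_a^b=\max(\min(x,b),a)$.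
   Context: $\log$ is the natural logarithm. This problem models an ideal receiver that decodes information and harvests energy from the same received signal without loss. The dual variables are those of the Lagrangian $E_\nu[\log(1+h p/\sigma^2)]+\lambda(E_\nu[hp]-\bar Q)-\beta(E_\nu[p]-P_{\rm avg})$. *)

theory Defs
  imports "HOL-Probability.Probability"
begin

definition clip :: "real \<Rightarrow> real \<Rightarrow> real \<Rightarrow> real" where
  "clip a b x = max (min x b) a"

text \<open>Power allocations obeying only the peak constraint (domain of the Lagrangian).\<close>
definition peak_allocs :: "'a measure \<Rightarrow> real \<Rightarrow> ('a \<Rightarrow> real) set" where
  "peak_allocs M Ppeak =
     {p \<in> borel_measurable M. \<forall>\<nu>\<in>space M. 0 \<le> p \<nu> \<and> p \<nu> \<le> Ppeak}"

definition power_set :: "'a measure \<Rightarrow> real \<Rightarrow> real \<Rightarrow> ('a \<Rightarrow> real) set" where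
  "power_set M Pavg Ppeak =
     {p \<in> peak_allocs M Ppeak. (\<integral>\<nu>. p \<nu> \<partial>M) \<le> Pavg}"

definition rate :: "'a measure \<Rightarrow> ('a \<Rightarrow> real) \<Rightarrow> real \<Rightarrow> ('a \<Rightarrow> real) \<Rightarrow> real" where
  "rate M h \<sigma>2 p = (\<integral>\<nu>. ln (1 + h \<nu> * p \<nu> / \<sigma>2) \<partial>M)"

definition feasible_allocs ::
  "'a measure \<Rightarrow> ('a \<Rightarrow> real) \<Rightarrow> real \<Rightarrow> real \<Rightarrow> real \<Rightarrow> ('a \<Rightarrow> real) set" where
  "feasible_allocs M h Qbar Pavg Ppeak =
     {p \<in> power_set M Pavg Ppeak. (\<integral>\<nu>. h \<nu> * p \<nu> \<partial>M) \<ge> Qbar}"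

definition optimal_alloc ::
  "'a measure \<Rightarrow> ('a \<Rightarrow> real) \<Rightarrow> real \<Rightarrow> real \<Rightarrow> real \<Rightarrow> real \<Rightarrow> ('a \<Rightarrow> real) \<Rightarrow> bool" where
  "optimal_alloc M h \<sigma>2 Qbar Pavg Ppeak p \<longleftrightarrow>
     p \<in> feasible_allocs M h Qbar Pavg Ppeak \<and>
     (\<forall>q \<in> feasible_allocs M h Qbar Pavg Ppeak. rate M h \<sigma>2 q \<le> rate M h \<sigma>2 p)"

definition lagrangian ::
  "'a measure \<Rightarrow> ('a \<Rightarrow> real) \<Rightarrow> real \<Rightarrow> real \<Rightarrow> real \<Rightarrow> ('a \<Rightarrow> real) \<Rightarrow> real \<Rightarrow> real \<Rightarrow> real" where
  "lagrangian M h \<sigma>2 Qbar Pavg p lam bet =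
     rate M h \<sigma>2 p + lam * ((\<integral>\<nu>. h \<nu> * p \<nu> \<partial>M) - Qbar) - bet * ((\<integral>\<nu>. p \<nu> \<partial>M) - Pavg)"

definition dual_fun ::
  "'a measure \<Rightarrow> ('a \<Rightarrow> real) \<Rightarrow> real \<Rightarrow> real \<Rightarrow> real \<Rightarrow> real \<Rightarrow> real \<Rightarrow> real \<Rightarrow> real" where
  "dual_fun M h \<sigma>2 Qbar Pavg Ppeak lam bet =
     (SUP p \<in> peak_allocs M Ppeak. lagrangian M h \<sigma>2 Qbar Pavg p lam bet)"

definition dual_optimal ::
  "'a measure \<Rightarrow> ('a \<Rightarrow> real) \<Rightarrow> real \<Rightarrow> real \<Rightarrow> real \<Rightarrow> real \<Rightarrow> real \<Rightarrow> real \<Rightarrow> bool" where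
  "dual_optimal M h \<sigma>2 Qbar Pavg Ppeak lam bet \<longleftrightarrow>
     lam \<ge> 0 \<and> bet \<ge> 0 \<and>
     (\<forall>lam' bet'. lam' \<ge> 0 \<longrightarrow> bet' \<ge> 0 \<longrightarrow>
        dual_fun M h \<sigma>2 Qbar Pavg Ppeak lam bet \<le> dual_fun M h \<sigma>2 Qbar Pavg Ppeak lam' bet')"

end

theory Submission
  imports Defs
begin

text \<open>
  The Lagrangian separates over the fading states: up to constants it is the expectation of
  \<open>ln (1 + h p / \<sigma>\<^sup>2) + \<lambda> h p - \<beta> p\<close>, which is concave in \<open>p\<close> when \<open>h > 0\<close> and is maximised
  over \<open>[0, P\<^sub>peak]\<close> by the clipped water-filling level \<open>w(\<lambda>, \<beta>)\<close>. Hence the dual function is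
  the Lagrangian at \<open>w(\<lambda>, \<beta>)\<close>; as the Lagrangian of a fixed allocation is affine in the
  multipliers, minimality of the dual at \<open>(\<lambda>\<^sup>*, \<beta>\<^sup>*)\<close> gives, for all \<open>\<lambda>, \<beta> \<ge> 0\<close>,
  \<open>0 \<le> (\<lambda> - \<lambda>\<^sup>*) (E[h w(\<lambda>, \<beta>)] - Q) - (\<beta> - \<beta>\<^sup>*) (E[w(\<lambda>, \<beta>)] - P\<^sub>avg)\<close>.
  Since \<open>w\<close> depends continuously on the multipliers, letting \<open>\<lambda> \<rightarrow> \<lambda>\<^sup>*\<close> (resp. \<open>\<beta> \<rightarrow> \<beta>\<^sup>*\<close>) from
  either side yields primal feasibility and complementary slackness of \<open>w(\<lambda>\<^sup>*, \<beta>\<^sup>*)\<close>, and weak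
  duality makes it optimal. The density of \<open>h\<close> only serves to make \<open>h > 0\<close> almost surely.
\<close>

lemma distributed_lborel_AE_neq:
  fixes X :: "'a \<Rightarrow> 'b::euclidean_space"
  assumes "distributed M lborel X f"
  shows "AE x in M. X x \<noteq> c"
proof -
  have X: "X \<in> measurable M lborel" and f: "f \<in> borel_measurable lborel"
    and distr: "distr M lborel X = density lborel f"
    using assms by (auto simp: distributed_def)
  have "AE y in density lborel f. y \<noteq> c"
    using AE_lborel_singleton[of c] by (subst AE_density[OF f]) (auto elim: AE_mp)
  then show ?thesis
    unfolding distr[symmetric] by (rule AE_distrD[OF X])
qed

lemma half_line_variational_inequality:
  fixes a :: "real \<Rightarrow> real"
  assumes cont: "isCont a t\<^sub>0" and "t\<^sub>0 \<ge> 0"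
    and ineq: "\<And>t. t \<ge> 0 \<Longrightarrow> 0 \<le> (t - t\<^sub>0) * (a t - c)"
  shows "c \<le> a t\<^sub>0" and "t\<^sub>0 * (a t\<^sub>0 - c) = 0"
proof -
  have "eventually (\<lambda>t. c \<le> a t) (at_right t\<^sub>0)"
    using eventually_at_right_less[of t\<^sub>0]
  proof eventually_elim
    case (elim t)
    then show ?case using ineq[of t] \<open>t\<^sub>0 \<ge> 0\<close> by (simp add: zero_le_mult_iff)
  qed
  then show lower: "c \<le> a t\<^sub>0"
    using cont by (intro tendsto_lowerbound[of a _ "at_right t\<^sub>0"]) (auto simp: isCont_def filterlim_at_split)
  have "a t\<^sub>0 \<le> c" if "t\<^sub>0 > 0"
  proof -
    have "eventually (\<lambda>t. a t \<le> c) (at_left t\<^sub>0)"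
      using eventually_at_left_real[OF that]
    proof eventually_elim
      case (elim t)
      then show ?case using ineq[of t] by (auto simp: zero_le_mult_iff)
    qed
    then show ?thesis
      using cont by (intro tendsto_upperbound[of a _ "at_left t\<^sub>0"]) (auto simp: isCont_def filterlim_at_split)
  qed
  then show "t\<^sub>0 * (a t\<^sub>0 - c) = 0"
    using lower \<open>t\<^sub>0 \<ge> 0\<close> by (cases "t\<^sub>0 = 0") auto
qed

definition state_lagrangian :: "real \<Rightarrow> real \<Rightarrow> real \<Rightarrow> real \<Rightarrow> real \<Rightarrow> real" where
  "state_lagrangian \<sigma>2 l b x y = ln (1 + x * y / \<sigma>2) + l * (x * y) - b * y"

definition water_filling :: "real \<Rightarrow> real \<Rightarrow> real \<Rightarrow> real \<Rightarrow> real \<Rightarrow> real" where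
  "water_filling \<sigma>2 Pk l b x =
     (if b \<le> l * x then Pk else clip 0 Pk (1 / (b - l * x) - \<sigma>2 / x))"

lemma state_lagrangian_le_tangent:
  assumes "\<sigma>2 > 0" "x > 0" "y \<ge> 0" "z \<ge> 0"
  shows "state_lagrangian \<sigma>2 l b x y
           \<le> state_lagrangian \<sigma>2 l b x z + (y - z) * (x / (\<sigma>2 + x * z) + l * x - b)"
proof -
  have pos: "1 + x * z / \<sigma>2 > 0" "1 + x * y / \<sigma>2 > 0"
    using assms by (auto intro: add_pos_nonneg)
  have "ln (1 + x * y / \<sigma>2) - ln (1 + x * z / \<sigma>2)
          \<le> ((1 + x * y / \<sigma>2) - (1 + x * z / \<sigma>2)) / (1 + x * z / \<sigma>2)"
    using ln_diff_le[OF pos(2,1)] .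
  also have "\<dots> = (x * (y - z) / \<sigma>2) / ((\<sigma>2 + x * z) / \<sigma>2)"
    using assms by (simp add: add_divide_distrib diff_divide_distrib right_diff_distrib)
  also have "\<dots> = (y - z) * (x / (\<sigma>2 + x * z))"
    using assms by simp
  finally show ?thesis
    unfolding state_lagrangian_def by (simp add: algebra_simps)
qed

lemma water_filling_bounds:
  assumes "Pk \<ge> 0"
  shows "0 \<le> water_filling \<sigma>2 Pk l b x" and "water_filling \<sigma>2 Pk l b x \<le> Pk"
  using assms by (auto simp: water_filling_def clip_def)

text \<open>
  By concavity it suffices that the derivative at the water-filling level \<open>z\<close> has the right
  sign: it vanishes at an interior level, is \<open>\<le> 0\<close> at \<open>z = 0\<close> and \<open>\<ge> 0\<close> at \<open>z = Pk\<close>.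
\<close>
lemma state_lagrangian_le_water_filling:
  assumes "\<sigma>2 > 0" "x > 0" "0 \<le> y" "y \<le> Pk" "l \<ge> 0"
  shows "state_lagrangian \<sigma>2 l b x y \<le> state_lagrangian \<sigma>2 l b x (water_filling \<sigma>2 Pk l b x)"
proof -
  let ?z = "water_filling \<sigma>2 Pk l b x"
  have Pk: "Pk \<ge> 0" using assms by linarith
  have "(y - ?z) * (x / (\<sigma>2 + x * ?z) + l * x - b) \<le> 0"
  proof (cases "b \<le> l * x")
    case True
    then have z: "?z = Pk" by (simp add: water_filling_def)
    have "x / (\<sigma>2 + x * Pk) > 0" using assms Pk by (auto intro!: divide_pos_pos add_pos_nonneg)
    then show ?thesis using z True assms by (intro mult_nonpos_nonneg) auto
  next
    case False
    define s where "s = b - l * x"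
    define level where "level = 1 / s - \<sigma>2 / x"
    have s: "s > 0" using False s_def by auto
    have z: "?z = max (min level Pk) 0"
      using False by (simp add: water_filling_def clip_def level_def s_def)
    have deriv: "x / (\<sigma>2 + x * w) + l * x - b = x / (\<sigma>2 + x * w) - s" for w
      using s_def by simp
    have level: "\<sigma>2 + x * level = x / s" using assms s by (simp add: level_def field_simps)
    consider "Pk \<le> level" | "level \<le> 0" | "0 < level" "level < Pk" by linarith
    then show ?thesis
    proof cases
      case 1
      then have "\<sigma>2 + x * Pk \<le> x / s"
        using level assms by (metis add_le_cancel_left mult_le_cancel_left_pos)
      then have "s * (\<sigma>2 + x * Pk) \<le> x"
        using s by (simp add: field_simps)
      then have "s \<le> x / (\<sigma>2 + x * Pk)"
        using assms Pk by (simp add: field_simps add_pos_nonneg)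
      moreover have "?z = Pk" using z 1 Pk by simp
      ultimately show ?thesis unfolding deriv using assms by (intro mult_nonpos_nonneg) auto
    next
      case 2
      then have "x * level \<le> 0" using assms by (simp add: mult_nonneg_nonpos)
      then have "x / s \<le> \<sigma>2" using level by linarith
      then have "x \<le> \<sigma>2 * s" using s by (simp add: field_simps)
      then have "x / \<sigma>2 \<le> s" using assms by (simp add: field_simps)
      moreover have "?z = 0" using z 2 Pk by simp
      ultimately show ?thesis unfolding deriv using assms by (intro mult_nonneg_nonpos) auto
    next
      case 3
      then have "?z = level" using z by simp
      moreover have "x / (\<sigma>2 + x * level) = s" using level s assms by simp
      ultimately show ?thesis unfolding deriv by simp
    qed
  qed
  moreover have "0 \<le> ?z" by (rule water_filling_bounds(1)[OF Pk])
  ultimately show ?thesis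
    using state_lagrangian_le_tangent[OF assms(1-3), of ?z l b] by linarith
qed

text \<open>A form that is visibly continuous in \<open>l\<close> and \<open>b\<close>: capping \<open>b - l x\<close> from below absorbs the case \<open>b \<le> l x\<close>.\<close>
lemma water_filling_eq_min_max:
  assumes "\<sigma>2 > 0" "x > 0" "Pk \<ge> 0"
  shows "water_filling \<sigma>2 Pk l b x
           = min Pk (max 0 (1 / max (b - l * x) (1 / (Pk + \<sigma>2 / x)) - \<sigma>2 / x))"
proof -
  define s\<^sub>0 where "s\<^sub>0 = 1 / (Pk + \<sigma>2 / x)"
  have "Pk + \<sigma>2 / x > 0" using assms by (auto intro: add_nonneg_pos)
  then have s\<^sub>0: "s\<^sub>0 > 0" "1 / s\<^sub>0 - \<sigma>2 / x = Pk" by (auto simp: s\<^sub>0_def)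
  consider "b \<le> l * x" | "l * x < b" "b - l * x \<le> s\<^sub>0" | "s\<^sub>0 < b - l * x" by linarith
  then have "water_filling \<sigma>2 Pk l b x = min Pk (max 0 (1 / max (b - l * x) s\<^sub>0 - \<sigma>2 / x))"
  proof cases
    case 1
    then have "max (b - l * x) s\<^sub>0 = s\<^sub>0" using s\<^sub>0 by simp
    then show ?thesis using 1 s\<^sub>0 assms by (simp add: water_filling_def)
  next
    case 2
    then have "1 / s\<^sub>0 \<le> 1 / (b - l * x)" by (intro divide_left_mono) auto
    then show ?thesis using 2 s\<^sub>0 assms by (simp add: water_filling_def clip_def)
  next
    case 3
    then have "1 / (b - l * x) \<le> 1 / s\<^sub>0" using s\<^sub>0 by (intro divide_left_mono) auto
    then show ?thesis using 3 s\<^sub>0 assms by (simp add: water_filling_def clip_def max_def min_def)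
  qed
  then show ?thesis by (simp add: s\<^sub>0_def)
qed

lemma tendsto_water_filling:
  assumes "\<sigma>2 > 0" "x > 0" "Pk \<ge> 0" and l: "(l \<longlongrightarrow> l\<^sub>0) F" and b: "(b \<longlongrightarrow> b\<^sub>0) F"
  shows "((\<lambda>t. water_filling \<sigma>2 Pk (l t) (b t) x) \<longlongrightarrow> water_filling \<sigma>2 Pk l\<^sub>0 b\<^sub>0 x) F"
proof -
  have "1 / (Pk + \<sigma>2 / x) > 0" using assms by (auto intro: add_nonneg_pos)
  then have "max (b\<^sub>0 - l\<^sub>0 * x) (1 / (Pk + \<sigma>2 / x)) \<noteq> 0" by linarith
  then show ?thesis
    unfolding water_filling_eq_min_max[OF assms(1-3)] by (intro tendsto_intros l b)
qed

lemma lagrangian_shift_multipliers: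
  "lagrangian M h \<sigma>2 Q P p l' b'
     = lagrangian M h \<sigma>2 Q P p l b + (l' - l) * ((\<integral>\<nu>. h \<nu> * p \<nu> \<partial>M) - Q)
       - (b' - b) * ((\<integral>\<nu>. p \<nu> \<partial>M) - P)"
  unfolding lagrangian_def by (simp add: algebra_simps)

locale fading_channel = prob_space M
  for M :: "'a measure" +
  fixes h :: "'a \<Rightarrow> real" and \<sigma>2 Pk :: real
  assumes h_measurable [measurable]: "h \<in> borel_measurable M"
    and h_nonneg: "\<And>\<nu>. \<nu> \<in> space M \<Longrightarrow> 0 \<le> h \<nu>"
    and AE_h_pos: "AE \<nu> in M. 0 < h \<nu>"
    and integrable_h: "integrable M h"
    and \<sigma>2_pos: "0 < \<sigma>2"
    and Pk_nonneg: "0 \<le> Pk"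
begin

definition water_filling_alloc :: "real \<Rightarrow> real \<Rightarrow> 'a \<Rightarrow> real" where
  "water_filling_alloc l b \<nu> = water_filling \<sigma>2 Pk l b (h \<nu>)"

lemma water_filling_alloc_measurable [measurable]: "water_filling_alloc l b \<in> borel_measurable M"
  unfolding water_filling_alloc_def water_filling_def clip_def by measurable

lemma water_filling_alloc_in_peak_allocs: "water_filling_alloc l b \<in> peak_allocs M Pk"
  using water_filling_bounds[OF Pk_nonneg] by (simp add: peak_allocs_def water_filling_alloc_def)

lemma norm_h_mult_le:
  assumes "\<nu> \<in> space M" "0 \<le> y" "y \<le> Pk"
  shows "norm (h \<nu> * y) \<le> h \<nu> * Pk"
  using assms h_nonneg[OF assms(1)] by (simp add: abs_mult mult_left_mono)

lemma integrable_peak_alloc: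
  assumes "q \<in> peak_allocs M Pk"
  shows "integrable M q" and "integrable M (\<lambda>\<nu>. h \<nu> * q \<nu>)"
    and "integrable M (\<lambda>\<nu>. ln (1 + h \<nu> * q \<nu> / \<sigma>2))"
proof -
  have [measurable]: "q \<in> borel_measurable M"
    and q: "\<And>\<nu>. \<nu> \<in> space M \<Longrightarrow> 0 \<le> q \<nu> \<and> q \<nu> \<le> Pk"
    using assms by (auto simp: peak_allocs_def)
  show "integrable M q"
    by (rule integrable_const_bound[where B = Pk]) (use q in \<open>auto intro!: AE_I2\<close>)
  show "integrable M (\<lambda>\<nu>. h \<nu> * q \<nu>)"
    by (rule Bochner_Integration.integrable_bound[where f = "\<lambda>\<nu>. h \<nu> * Pk"])
      (use integrable_h norm_h_mult_le q in \<open>auto intro!: AE_I2 intro: order_trans[OF _ abs_ge_self]\<close>)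
  have ln_bound: "norm (ln (1 + h \<nu> * q \<nu> / \<sigma>2)) \<le> norm (h \<nu> * Pk / \<sigma>2)"
    if "\<nu> \<in> space M" for \<nu>
  proof -
    let ?x = "h \<nu> * q \<nu> / \<sigma>2"
    have x: "0 \<le> ?x" using q h_nonneg that \<sigma>2_pos by simp
    then have "0 \<le> ln (1 + ?x)" by simp
    then have "norm (ln (1 + ?x)) = ln (1 + ?x)" by (simp only: real_norm_def abs_of_nonneg)
    also have "\<dots> \<le> ?x" by (rule ln_add_one_self_le_self[OF x])
    also have "\<dots> \<le> h \<nu> * Pk / \<sigma>2"
      using norm_h_mult_le[OF that, of "q \<nu>"] q[OF that] \<sigma>2_pos
      by (intro divide_right_mono) (auto dest: abs_le_D1)
    also have "\<dots> = norm (h \<nu> * Pk / \<sigma>2)"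
      using h_nonneg[OF that] Pk_nonneg \<sigma>2_pos
      by (metis abs_of_nonneg real_norm_def divide_nonneg_pos mult_nonneg_nonneg)
    finally show ?thesis .
  qed
  show "integrable M (\<lambda>\<nu>. ln (1 + h \<nu> * q \<nu> / \<sigma>2))"
    by (rule Bochner_Integration.integrable_bound[where f = "\<lambda>\<nu>. h \<nu> * Pk / \<sigma>2"])
      (use integrable_h ln_bound in \<open>simp_all add: AE_I2\<close>)
qed

lemma lagrangian_eq_integral_state_lagrangian:
  assumes "q \<in> peak_allocs M Pk"
  shows "lagrangian M h \<sigma>2 Q P q l b
           = (\<integral>\<nu>. state_lagrangian \<sigma>2 l b (h \<nu>) (q \<nu>) \<partial>M) + b * P - l * Q"
  using integrable_peak_alloc[OF assms]
  by (simp add: state_lagrangian_def lagrangian_def rate_def algebra_simps)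

lemma lagrangian_le_water_filling_alloc:
  assumes q: "q \<in> peak_allocs M Pk" and "0 \<le> l"
  shows "lagrangian M h \<sigma>2 Q P q l b \<le> lagrangian M h \<sigma>2 Q P (water_filling_alloc l b) l b"
proof -
  have integrable: "integrable M (\<lambda>\<nu>. state_lagrangian \<sigma>2 l b (h \<nu>) (p \<nu>))"
    if "p \<in> peak_allocs M Pk" for p
    using integrable_peak_alloc[OF that] by (simp add: state_lagrangian_def)
  have "AE \<nu> in M. state_lagrangian \<sigma>2 l b (h \<nu>) (q \<nu>)
                   \<le> state_lagrangian \<sigma>2 l b (h \<nu>) (water_filling_alloc l b \<nu>)"
    using AE_h_pos
  proof (rule AE_mp, intro AE_I2 impI)
    fix \<nu> assume "\<nu> \<in> space M" "0 < h \<nu>"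
    then show "state_lagrangian \<sigma>2 l b (h \<nu>) (q \<nu>)
                 \<le> state_lagrangian \<sigma>2 l b (h \<nu>) (water_filling_alloc l b \<nu>)"
      using q state_lagrangian_le_water_filling[OF \<sigma>2_pos _ _ _ \<open>0 \<le> l\<close>]
      by (auto simp: peak_allocs_def water_filling_alloc_def)
  qed
  then show ?thesis
    using integral_mono_AE[OF integrable[OF q] integrable[OF water_filling_alloc_in_peak_allocs]]
    by (simp add: lagrangian_eq_integral_state_lagrangian[OF q]
        lagrangian_eq_integral_state_lagrangian[OF water_filling_alloc_in_peak_allocs])
qed

lemma dual_fun_eq_lagrangian_water_filling_alloc:
  assumes "0 \<le> l"
  shows "dual_fun M h \<sigma>2 Q P Pk l b = lagrangian M h \<sigma>2 Q P (water_filling_alloc l b) l b"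
  unfolding dual_fun_def
  by (rule cSup_eq_maximum)
    (use water_filling_alloc_in_peak_allocs lagrangian_le_water_filling_alloc assms in auto)

lemma tendsto_integral_water_filling_alloc:
  assumes w: "integrable M w" and "l \<longlonglongrightarrow> l\<^sub>0" "b \<longlonglongrightarrow> b\<^sub>0"
  shows "(\<lambda>n. \<integral>\<nu>. w \<nu> * water_filling_alloc (l n) (b n) \<nu> \<partial>M)
           \<longlonglongrightarrow> (\<integral>\<nu>. w \<nu> * water_filling_alloc l\<^sub>0 b\<^sub>0 \<nu> \<partial>M)"
proof (rule integral_dominated_convergence[where w = "\<lambda>\<nu>. norm (w \<nu>) * Pk"])
  have [measurable]: "w \<in> borel_measurable M" using w by (rule borel_measurable_integrable)
  show "(\<lambda>\<nu>. w \<nu> * water_filling_alloc l\<^sub>0 b\<^sub>0 \<nu>) \<in> borel_measurable M"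
    and "\<And>n. (\<lambda>\<nu>. w \<nu> * water_filling_alloc (l n) (b n) \<nu>) \<in> borel_measurable M"
    by measurable
  show "integrable M (\<lambda>\<nu>. norm (w \<nu>) * Pk)" using w by simp
  show "AE \<nu> in M. norm (w \<nu> * water_filling_alloc (l n) (b n) \<nu>) \<le> norm (w \<nu>) * Pk" for n
    using water_filling_bounds[OF Pk_nonneg]
    by (auto simp: water_filling_alloc_def abs_mult intro!: AE_I2 mult_left_mono)
  show "AE \<nu> in M. (\<lambda>n. w \<nu> * water_filling_alloc (l n) (b n) \<nu>)
                     \<longlonglongrightarrow> w \<nu> * water_filling_alloc l\<^sub>0 b\<^sub>0 \<nu>"
    using AE_h_pos
    by (rule AE_mp) (auto intro!: AE_I2 tendsto_intros tendsto_water_filling \<sigma>2_pos Pk_nonneg assms(2,3)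
        simp: water_filling_alloc_def)
qed

lemma dual_optimal_variational_inequality:
  assumes "dual_optimal M h \<sigma>2 Q P Pk lam bet" "0 \<le> l" "0 \<le> b"
  shows "0 \<le> (l - lam) * ((\<integral>\<nu>. h \<nu> * water_filling_alloc l b \<nu> \<partial>M) - Q)
              - (b - bet) * ((\<integral>\<nu>. water_filling_alloc l b \<nu> \<partial>M) - P)"
proof -
  let ?L = "lagrangian M h \<sigma>2 Q P (water_filling_alloc l b)"
  have "?L lam bet \<le> dual_fun M h \<sigma>2 Q P Pk lam bet"
    using assms(1) lagrangian_le_water_filling_alloc[OF water_filling_alloc_in_peak_allocs]
    by (simp add: dual_optimal_def dual_fun_eq_lagrangian_water_filling_alloc)
  also have "\<dots> \<le> dual_fun M h \<sigma>2 Q P Pk l b"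
    using assms by (simp add: dual_optimal_def)
  also have "\<dots> = ?L l b"
    using assms(2) by (rule dual_fun_eq_lagrangian_water_filling_alloc)
  finally show ?thesis
    using lagrangian_shift_multipliers[of M h \<sigma>2 Q P _ lam bet l b] by (simp add: left_diff_distrib)
qed

lemma isCont_integral_water_filling_alloc:
  assumes "integrable M w"
  shows "isCont (\<lambda>l. \<integral>\<nu>. w \<nu> * water_filling_alloc l b \<nu> \<partial>M) l\<^sub>0"
    and "isCont (\<lambda>b. \<integral>\<nu>. w \<nu> * water_filling_alloc l b \<nu> \<partial>M) b\<^sub>0"
  by (auto intro!: continuous_at_sequentiallyI tendsto_integral_water_filling_alloc assms)

lemma dual_optimal_imp_KKT:
  assumes "dual_optimal M h \<sigma>2 Q P Pk lam bet"
  defines "E \<equiv> \<integral>\<nu>. h \<nu> * water_filling_alloc lam bet \<nu> \<partial>M"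
    and "A \<equiv> \<integral>\<nu>. water_filling_alloc lam bet \<nu> \<partial>M"
  shows "Q \<le> E" and "lam * (E - Q) = 0" and "A \<le> P" and "bet * (A - P) = 0"
proof -
  have lam: "0 \<le> lam" and bet: "0 \<le> bet" using assms(1) by (auto simp: dual_optimal_def)
  have "isCont (\<lambda>l. \<integral>\<nu>. h \<nu> * water_filling_alloc l bet \<nu> \<partial>M) lam"
    by (rule isCont_integral_water_filling_alloc(1)[OF integrable_h])
  moreover have "0 \<le> (l - lam) * ((\<integral>\<nu>. h \<nu> * water_filling_alloc l bet \<nu> \<partial>M) - Q)" if "0 \<le> l" for l
    using dual_optimal_variational_inequality[OF assms(1) that bet] by simp
  ultimately show "Q \<le> E" and "lam * (E - Q) = 0"
    unfolding E_def by (fact half_line_variational_inequality[OF _ lam])+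
  have "isCont (\<lambda>b. \<integral>\<nu>. water_filling_alloc lam b \<nu> \<partial>M) bet"
    using isCont_integral_water_filling_alloc(2)[of "\<lambda>_. 1" bet lam] by simp
  then have "isCont (\<lambda>b. - (\<integral>\<nu>. water_filling_alloc lam b \<nu> \<partial>M)) bet"
    by (rule isCont_minus)
  moreover have "0 \<le> (b - bet) * (- (\<integral>\<nu>. water_filling_alloc lam b \<nu> \<partial>M) - - P)" if "0 \<le> b" for b
    using dual_optimal_variational_inequality[OF assms(1) lam that] by (simp add: right_diff_distrib)
  ultimately have "- P \<le> - A" and "bet * (- A - - P) = 0"
    unfolding A_def by (fact half_line_variational_inequality[OF _ bet])+
  then show "A \<le> P" and "bet * (A - P) = 0" by auto
qed

lemma dual_optimal_imp_optimal_alloc: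
  assumes "dual_optimal M h \<sigma>2 Q P Pk lam bet"
  shows "optimal_alloc M h \<sigma>2 Q P Pk (water_filling_alloc lam bet)"
  unfolding optimal_alloc_def
proof (intro conjI ballI)
  have lam: "0 \<le> lam" and bet: "0 \<le> bet" using assms by (auto simp: dual_optimal_def)
  note KKT = dual_optimal_imp_KKT[OF assms]
  show "water_filling_alloc lam bet \<in> feasible_allocs M h Q P Pk"
    using water_filling_alloc_in_peak_allocs KKT(1,3)
    by (simp add: feasible_allocs_def power_set_def)
  fix q assume "q \<in> feasible_allocs M h Q P Pk"
  then have q: "q \<in> peak_allocs M Pk" "Q \<le> (\<integral>\<nu>. h \<nu> * q \<nu> \<partial>M)" "(\<integral>\<nu>. q \<nu> \<partial>M) \<le> P"
    by (auto simp: feasible_allocs_def power_set_def)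
  have "0 \<le> lam * ((\<integral>\<nu>. h \<nu> * q \<nu> \<partial>M) - Q)" and "bet * ((\<integral>\<nu>. q \<nu> \<partial>M) - P) \<le> 0"
    using q lam bet by (simp_all add: mult_nonneg_nonpos)
  then have "rate M h \<sigma>2 q \<le> lagrangian M h \<sigma>2 Q P q lam bet"
    by (simp add: lagrangian_def)
  also have "\<dots> \<le> lagrangian M h \<sigma>2 Q P (water_filling_alloc lam bet) lam bet"
    using q(1) lam by (rule lagrangian_le_water_filling_alloc)
  also have "\<dots> = rate M h \<sigma>2 (water_filling_alloc lam bet)"
    unfolding lagrangian_def KKT(2,4) by simp
  finally show "rate M h \<sigma>2 q \<le> rate M h \<sigma>2 (water_filling_alloc lam bet)" .
qed

end

theorem proposition4p3:
  fixes M :: "'a measure" and h :: "'a \<Rightarrow> real" and f :: "real \<Rightarrow> real"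
    and \<sigma>2 Pavg Ppeak Qbar lam bet :: real
  assumes "prob_space M"
    and h_nonneg: "\<forall>\<nu>\<in>space M. h \<nu> \<ge> 0"
    and h_pdf: "distributed M lborel h (\<lambda>x. ennreal (f x))"
    and f_cont: "continuous_on {0..} f"
    and h_int: "integrable M h"
    and "\<sigma>2 > 0" and "0 < Pavg" and "Pavg \<le> Ppeak"
    and "Qbar \<ge> 0" and "feasible_allocs M h Qbar Pavg Ppeak \<noteq> {}"
    and "dual_optimal M h \<sigma>2 Qbar Pavg Ppeak lam bet"
  shows "optimal_alloc M h \<sigma>2 Qbar Pavg Ppeak
           (\<lambda>\<nu>. if bet \<le> lam * h \<nu> then Ppeak
                 else clip 0 Ppeak (1 / (bet - lam * h \<nu>) - \<sigma>2 / h \<nu>))"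
proof -
  have "AE \<nu> in M. 0 < h \<nu>"
    using distributed_lborel_AE_neq[OF h_pdf, of 0]
    by (rule AE_mp) (use h_nonneg in \<open>auto intro!: AE_I2 simp: less_le\<close>)
  moreover have "h \<in> borel_measurable M"
    using h_pdf by (auto simp: distributed_def)
  ultimately interpret fading_channel M h \<sigma>2 Ppeak
    using assms by (auto simp: fading_channel_def fading_channel_axioms_def)
  have "water_filling_alloc lam bet
          = (\<lambda>\<nu>. if bet \<le> lam * h \<nu> then Ppeak
                 else clip 0 Ppeak (1 / (bet - lam * h \<nu>) - \<sigma>2 / h \<nu>))"
    by (simp add: fun_eq_iff water_filling_alloc_def water_filling_def)
  with dual_optimal_imp_optimal_alloc[OF \<open>dual_optimal M h \<sigma>2 Qbar Pavg Ppeak lam bet\<close>]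
  show ?thesis by simp
qed

end
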